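(* For any $n\in\mathbb{N}$ and $A>0$, there exists $f\in C^1[-1,1]$ with $f\le0$ on $[-1,0]$ and $f\ge0$ on $[0,1]$, such that every algebraic polynomial $P_n$ of degree $\le n$ which satisfies $P_n\ge0$ on $(0,1/n)$ and $P_n^{(i)}(0)=f^{(i)}(0)$ for $i=0,1$ obeys $$\|f-P_n\|>A\,\omega_3(f',1).$$
   Context: $\|\cdot\|$ is the sup norm on $[-1,1]$; $\omega_3(g,t)$ is the third modulus of smoothness of $g$ on $[-1,1]$. *)

theory Defs
  imports "HOL-Analysis.Analysis" "HOL-Computational_Algebra.Polynomial"
begin

definition sup_norm :: "(real \<Rightarrow> real) \<Rightarrow> real" where
  "sup_norm g = (SUP x\<in>{-1..1}. \<bar>g x\<bar>)"

definition diff3 :: "(real \<Rightarrow> real) \<Rightarrow> real \<Rightarrow> real \<Rightarrow> real" where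
  "diff3 g h x = g (x + 3*h) - 3 * g (x + 2*h) + 3 * g (x + h) - g x"

definition omega3 :: "(real \<Rightarrow> real) \<Rightarrow> real \<Rightarrow> real" where
  "omega3 g t = Sup {\<bar>diff3 g h x\<bar> | x h. 0 < h \<and> h \<le> t \<and> -1 \<le> x \<and> x + 3*h \<le> 1}"

definition C1_with :: "(real \<Rightarrow> real) \<Rightarrow> (real \<Rightarrow> real) \<Rightarrow> bool" where
  "C1_with f f' \<longleftrightarrow> (\<forall>x\<in>{-1..1}. (f has_real_derivative f' x) (at x within {-1..1}))
                      \<and> continuous_on {-1..1} f'"

end

theory Submission
  imports Defs
begin

text \<open>
  For small \<open>\<delta> > 0\<close> take \<open>f\<close> to be the cubic \<open>q(x) = x\<^sup>2(x - \<delta>)\<close> with its negative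
  hump on \<open>(0, \<delta>)\<close> flattened out. Then \<open>f\<close> is within \<open>\<delta>\<^sup>2\<close> of \<open>q\<close> on \<open>[0, 1]\<close> and \<open>f'\<close> is
  within \<open>\<delta>\<^sup>2\<close> of the quadratic \<open>q'\<close>, so \<open>\<omega>\<^sub>3(f', 1) = O(\<delta>\<^sup>2)\<close>. If \<open>P\<close> approximated \<open>f\<close>
  that well, \<open>e = P - q\<close> would be a polynomial of degree at most \<open>n + 3\<close> with a double zero
  at \<open>0\<close> and of size \<open>O(\<delta>\<^sup>2)\<close> on \<open>[0, 1]\<close>; equivalence of norms on such polynomials then
  gives \<open>e(\<delta>/2) = O(\<delta>\<^sup>4)\<close>. But \<open>P(\<delta>/2) \<ge> 0\<close>, hence \<open>e(\<delta>/2) \<ge> -q(\<delta>/2) = \<delta>\<^sup>3/8\<close>,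
  which is impossible for small \<open>\<delta>\<close>.
\<close>

lemma has_real_derivative_if_le:
  fixes f g f' g' :: "real \<Rightarrow> real"
  assumes f: "\<And>x. (f has_real_derivative f' x) (at x)"
    and g: "\<And>x. (g has_real_derivative g' x) (at x)"
    and "f c = g c" and "f' c = g' c"
  shows "((\<lambda>x. if x \<le> c then f x else g x) has_real_derivative
          (if x \<le> c then f' x else g' x)) (at x)"
proof -
  have mult_eq: "\<And>a::real. (\<lambda>h. h * a) = (*) a" by (auto simp: fun_eq_iff)
  have "((\<lambda>x. if x \<in> {..c} then f x else g x) has_derivative
      (if x \<in> {..c} then (\<lambda>h. h * f' x) else (\<lambda>h. h * g' x))) (at x within ({..c} \<union> {c<..}))"
  proof (rule has_derivative_If_within_closures)
    fix y
    show "(f has_derivative (\<lambda>h. h * f' y)) (at y within {..c} \<union> (closure {..c} \<inter> closure {c<..}))"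
      using has_derivative_at_withinI[OF f[of y, unfolded has_field_derivative_def]]
      by (simp add: mult_eq)
    show "(g has_derivative (\<lambda>h. h * g' y)) (at y within {c<..} \<union> (closure {..c} \<inter> closure {c<..}))"
      using has_derivative_at_withinI[OF g[of y, unfolded has_field_derivative_def]]
      by (simp add: mult_eq)
  next
    fix y assume "y \<in> closure {..c}" "y \<in> closure {c<..}"
    then have "y = c" by auto
    then show "f y = g y" "(\<lambda>h. h * f' y) = (\<lambda>h. h * g' y)" using assms by auto
  qed auto
  moreover have "{..c} \<union> {c<..} = (UNIV::real set)" by auto
  ultimately show ?thesis
    by (auto simp: has_field_derivative_def mult_eq split: if_splits)
qed

lemma abs_le_sup_norm:
  assumes "continuous_on {-1..1} g" and "x \<in> {-1..1}"
  shows "\<bar>g x\<bar> \<le> sup_norm g"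
proof -
  have "bdd_above ((\<lambda>x. \<bar>g x\<bar>) ` {-1..1})"
    by (intro bounded_imp_bdd_above compact_imp_bounded compact_continuous_image
        continuous_intros assms(1)) auto
  then show ?thesis
    unfolding sup_norm_def by (rule cSUP_upper[OF assms(2)])
qed

lemma diff3_quadratic: "diff3 (\<lambda>x. a * x\<^sup>2 + b * x + c) h x = 0"
  by (simp add: diff3_def power2_eq_square algebra_simps)

lemma omega3_le_of_near_quadratic:
  assumes "0 < t" and near: "\<And>x. x \<in> {-1..1} \<Longrightarrow> \<bar>g x - (a * x\<^sup>2 + b * x + c)\<bar> \<le> \<epsilon>"
  shows "omega3 g t \<le> 8 * \<epsilon>"
  unfolding omega3_def
proof (rule cSup_least)
  let ?h = "min t (2/3)"
  have "\<bar>diff3 g ?h (-1)\<bar> \<in> {\<bar>diff3 g h x\<bar> |x h. 0 < h \<and> h \<le> t \<and> -1 \<le> x \<and> x + 3*h \<le> 1}"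
    using \<open>0 < t\<close> by (intro CollectI exI[of _ "-1"] exI[of _ ?h]) auto
  then show "{\<bar>diff3 g h x\<bar> |x h. 0 < h \<and> h \<le> t \<and> -1 \<le> x \<and> x + 3*h \<le> 1} \<noteq> {}"
    by blast
next
  fix y assume "y \<in> {\<bar>diff3 g h x\<bar> |x h. 0 < h \<and> h \<le> t \<and> -1 \<le> x \<and> x + 3*h \<le> 1}"
  then obtain x h where y: "y = \<bar>diff3 g h x\<bar>" and h: "0 < h" "-1 \<le> x" "x + 3*h \<le> 1"
    by blast
  define r where "r x = g x - (a * x\<^sup>2 + b * x + c)" for x
  have "diff3 g h x = diff3 (\<lambda>x. a * x\<^sup>2 + b * x + c) h x + diff3 r h x"
    by (simp add: diff3_def r_def algebra_simps)
  then have "diff3 g h x = r (x + 3*h) - 3 * r (x + 2*h) + 3 * r (x + h) - r x"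
    by (simp add: diff3_quadratic diff3_def)
  then have "y \<le> \<bar>r (x + 3*h)\<bar> + 3 * \<bar>r (x + 2*h)\<bar> + 3 * \<bar>r (x + h)\<bar> + \<bar>r x\<bar>"
    using y by simp
  moreover have r_small: "\<bar>r z\<bar> \<le> \<epsilon>" if "x \<le> z" "z \<le> x + 3*h" for z
    unfolding r_def using that h by (intro near) auto
  ultimately show "y \<le> 8 * \<epsilon>"
    using h r_small[of x] r_small[of "x + h"] r_small[of "x + 2*h"] r_small[of "x + 3*h"]
    by linarith
qed

definition lagrange_basis :: "'a::field set \<Rightarrow> 'a \<Rightarrow> 'a poly" where
  "lagrange_basis X x = smult (1 / (\<Prod>y\<in>X-{x}. x - y)) (\<Prod>y\<in>X-{x}. [:-y, 1:])"

lemma degree_lagrange_basis: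
  assumes "finite X" "x \<in> X"
  shows "degree (lagrange_basis X x) \<le> card X - 1"
proof -
  have "degree (lagrange_basis X x) \<le> degree (\<Prod>y\<in>X-{x}. [:-y, 1:])"
    unfolding lagrange_basis_def by (rule degree_smult_le)
  also have "\<dots> \<le> sum (degree \<circ> (\<lambda>y. [:-y, 1:])) (X-{x})"
    by (rule degree_prod_sum_le) (use assms in auto)
  also have "\<dots> = card X - 1"
    using assms by simp
  finally show ?thesis .
qed

lemma poly_lagrange_basis:
  assumes "finite X" "x \<in> X" "z \<in> X"
  shows "poly (lagrange_basis X x) z = (if z = x then 1 else 0)"
proof (cases "z = x")
  case True
  have "(\<Prod>y\<in>X-{x}. x - y) \<noteq> 0" using assms by (subst prod_zero_iff) auto
  then show ?thesis using True by (simp add: lagrange_basis_def poly_prod)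
next
  case False
  have "(\<Prod>y\<in>X-{x}. z - y) = 0" using assms False by (subst prod_zero_iff) auto
  then show ?thesis using False by (simp add: lagrange_basis_def poly_prod)
qed

lemma lagrange_interpolation:
  fixes e :: "'a::field poly"
  assumes "finite X" "degree e < card X"
  shows "e = (\<Sum>x\<in>X. smult (poly e x) (lagrange_basis X x))"
proof (rule poly_eqI_degree[of X])
  fix z assume "z \<in> X"
  have "poly (\<Sum>x\<in>X. smult (poly e x) (lagrange_basis X x)) z
      = (\<Sum>x\<in>X. poly e x * poly (lagrange_basis X x) z)"
    by (simp add: poly_sum)
  also have "\<dots> = (\<Sum>x\<in>X. if x = z then poly e z else 0)"
    by (rule sum.cong) (use assms \<open>z \<in> X\<close> in \<open>auto simp: poly_lagrange_basis\<close>)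
  finally show "poly e z = poly (\<Sum>x\<in>X. smult (poly e x) (lagrange_basis X x)) z"
    using assms \<open>z \<in> X\<close> by simp
next
  have "degree (\<Sum>x\<in>X. smult (poly e x) (lagrange_basis X x)) \<le> card X - 1"
    by (rule degree_sum_le)
       (use assms degree_lagrange_basis in \<open>auto intro: order.trans[OF degree_smult_le]\<close>)
  then show "degree (\<Sum>x\<in>X. smult (poly e x) (lagrange_basis X x)) < card X"
    using assms by linarith
qed (use assms in simp)

lemma poly_coeffs_bounded_by_values:
  fixes X :: "real set"
  assumes "finite X"
  obtains K where "K \<ge> 0"
    and "\<And>e \<epsilon> k. degree e < card X \<Longrightarrow> (\<forall>x\<in>X. \<bar>poly e x\<bar> \<le> \<epsilon>) \<Longrightarrow> \<bar>coeff e k\<bar> \<le> K * \<epsilon>"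
proof -
  define K where "K = (\<Sum>k<card X. \<Sum>x\<in>X. \<bar>coeff (lagrange_basis X x) k\<bar>)"
  have "K \<ge> 0" unfolding K_def by (intro sum_nonneg) auto
  moreover have "\<bar>coeff e k\<bar> \<le> K * \<epsilon>"
    if degree: "degree e < card X" and small: "\<forall>x\<in>X. \<bar>poly e x\<bar> \<le> \<epsilon>" for e \<epsilon> k
  proof -
    obtain x0 where "x0 \<in> X" using degree by fastforce
    with small have "\<epsilon> \<ge> 0" by force
    show ?thesis
    proof (cases "k < card X")
      case False
      then show ?thesis using degree \<open>K \<ge> 0\<close> \<open>\<epsilon> \<ge> 0\<close> by (simp add: coeff_eq_0)
    next
      case True
      have "\<bar>coeff e k\<bar> = \<bar>\<Sum>x\<in>X. poly e x * coeff (lagrange_basis X x) k\<bar>"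
        by (subst lagrange_interpolation[OF assms degree]) (simp add: coeff_sum)
      also have "\<dots> \<le> (\<Sum>x\<in>X. \<epsilon> * \<bar>coeff (lagrange_basis X x) k\<bar>)"
        by (rule order.trans[OF sum_abs sum_mono])
           (use small in \<open>auto simp: abs_mult intro: mult_right_mono\<close>)
      also have "\<dots> \<le> \<epsilon> * K"
        unfolding K_def sum_distrib_left[symmetric]
        by (intro mult_left_mono[OF _ \<open>\<epsilon> \<ge> 0\<close>]
            member_le_sum[where f = "\<lambda>k. \<Sum>x\<in>X. \<bar>coeff (lagrange_basis X x) k\<bar>"])
           (use True in \<open>auto intro: sum_nonneg\<close>)
      finally show ?thesis by (simp add: mult.commute)
    qed
  qed
  ultimately show ?thesis using that by blast
qed

lemma poly_abs_le_sq_if_coeffs_bounded: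
  fixes e :: "real poly"
  assumes "degree e \<le> N" "coeff e 0 = 0" "coeff e 1 = 0"
    and coeffs: "\<And>k. \<bar>coeff e k\<bar> \<le> M" and "\<bar>x\<bar> \<le> 1"
  shows "\<bar>poly e x\<bar> \<le> (real N + 1) * M * x\<^sup>2"
proof -
  have "M \<ge> 0" using coeffs[of 0] by linarith
  have "\<bar>coeff e i * x ^ i\<bar> \<le> M * x\<^sup>2" for i
  proof (cases "i \<le> 1")
    case True
    then have "coeff e i = 0" using assms by (auto simp: le_Suc_eq)
    then show ?thesis using \<open>M \<ge> 0\<close> by simp
  next
    case False
    have "i = 2 + (i - 2)" using False by simp
    then have "\<bar>x\<bar> ^ i = \<bar>x\<bar>\<^sup>2 * \<bar>x\<bar> ^ (i - 2)"
      by (metis power_add)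
    also have "\<dots> \<le> x\<^sup>2"
      using \<open>\<bar>x\<bar> \<le> 1\<close> by (simp add: mult_left_le power_le_one)
    finally have "\<bar>x\<bar> ^ i \<le> x\<^sup>2" .
    then show ?thesis
      unfolding abs_mult power_abs by (intro mult_mono) (use coeffs \<open>M \<ge> 0\<close> in auto)
  qed
  moreover have "poly e x = (\<Sum>i\<le>N. coeff e i * x ^ i)"
    using assms(1) by (simp add: poly_altdef sum.mono_neutral_right[of "{..N}" "{..degree e}"] coeff_eq_0)
  ultimately have "\<bar>poly e x\<bar> \<le> (\<Sum>i\<le>N. M * x\<^sup>2)"
    by (simp only:) (rule order.trans[OF sum_abs sum_mono])
  then show ?thesis by (simp add: mult.assoc add.commute)
qed

definition double_zero_constant :: "nat \<Rightarrow> real \<Rightarrow> bool" where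
  "double_zero_constant N C \<longleftrightarrow>
    (\<forall>(e::real poly) \<epsilon> x. degree e \<le> N \<longrightarrow> coeff e 0 = 0 \<longrightarrow> coeff e 1 = 0 \<longrightarrow>
       (\<forall>y\<in>{0..1}. \<bar>poly e y\<bar> \<le> \<epsilon>) \<longrightarrow> \<bar>x\<bar> \<le> 1 \<longrightarrow> \<bar>poly e x\<bar> \<le> C * \<epsilon> * x\<^sup>2)"

lemma double_zero_constant_exists:
  obtains C where "C \<ge> 0" and "double_zero_constant N C"
proof -
  obtain X :: "real set" where X: "X \<subseteq> {0..1}" "finite X" "card X = Suc N"
    using infinite_arbitrarily_large[of "{0..1::real}"] by auto
  obtain K where "K \<ge> 0"
    and K: "\<And>e \<epsilon> k. degree e < card X \<Longrightarrow> (\<forall>x\<in>X. \<bar>poly e x\<bar> \<le> \<epsilon>) \<Longrightarrow> \<bar>coeff e k\<bar> \<le> K * \<epsilon>"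
    using poly_coeffs_bounded_by_values[OF X(2)] by blast
  have "double_zero_constant N ((real N + 1) * K)"
    unfolding double_zero_constant_def
  proof (intro allI impI)
    fix e :: "real poly" and \<epsilon> x :: real
    assume "degree e \<le> N" "coeff e 0 = 0" "coeff e 1 = 0" "\<forall>y\<in>{0..1}. \<bar>poly e y\<bar> \<le> \<epsilon>" "\<bar>x\<bar> \<le> 1"
    moreover from this have "\<And>k. \<bar>coeff e k\<bar> \<le> K * \<epsilon>"
      using X by (intro K) auto
    ultimately show "\<bar>poly e x\<bar> \<le> (real N + 1) * K * \<epsilon> * x\<^sup>2"
      using poly_abs_le_sq_if_coeffs_bounded[of e N "K * \<epsilon>" x] by (simp add: mult.assoc)
  qed
  then show ?thesis
    by (rule that[rotated]) (use \<open>K \<ge> 0\<close> in simp)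
qed

text \<open>The right branch \<open>(x - \<delta>)\<^sup>2(x + \<delta>) = x\<^sup>2(x - \<delta>) - \<delta>\<^sup>2(x - \<delta>)\<close> differs from the cubic by
  \<open>O(\<delta>\<^sup>2)\<close> and has a double zero at \<open>\<delta>\<close>, so the three pieces glue to a \<open>C\<^sup>1\<close> function.\<close>

definition plateau :: "real \<Rightarrow> real \<Rightarrow> real" where
  "plateau \<delta> x = (if x \<le> 0 then x\<^sup>2 * (x - \<delta>) else if x \<le> \<delta> then 0 else (x - \<delta>)\<^sup>2 * (x + \<delta>))"

definition plateau_deriv :: "real \<Rightarrow> real \<Rightarrow> real" where
  "plateau_deriv \<delta> x =
    (if x \<le> 0 then 3 * x\<^sup>2 - 2 * \<delta> * x else if x \<le> \<delta> then 0 else 3 * x\<^sup>2 - 2 * \<delta> * x - \<delta>\<^sup>2)"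

lemma plateau_has_real_derivative:
  assumes "0 \<le> \<delta>"
  shows "(plateau \<delta> has_real_derivative plateau_deriv \<delta> x) (at x)"
proof -
  have cubic: "((\<lambda>x. x\<^sup>2 * (x - \<delta>)) has_real_derivative 3 * x\<^sup>2 - 2 * \<delta> * x) (at x)" for x
    by (auto intro!: derivative_eq_intros simp: algebra_simps power2_eq_square)
  have shifted: "((\<lambda>x. (x - \<delta>)\<^sup>2 * (x + \<delta>)) has_real_derivative 3 * x\<^sup>2 - 2 * \<delta> * x - \<delta>\<^sup>2) (at x)" for x
    by (auto intro!: derivative_eq_intros simp: algebra_simps power2_eq_square)
  have "((\<lambda>x. if x \<le> \<delta> then 0 else (x - \<delta>)\<^sup>2 * (x + \<delta>)) has_real_derivative
      (if x \<le> \<delta> then 0 else 3 * x\<^sup>2 - 2 * \<delta> * x - \<delta>\<^sup>2)) (at x)" for x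
    by (rule has_real_derivative_if_le[OF DERIV_const shifted]) (auto simp: power2_eq_square)
  then show ?thesis
    unfolding plateau_def plateau_deriv_def
    by (rule has_real_derivative_if_le[OF cubic]) (use assms in auto)
qed

lemma continuous_on_plateau: "0 \<le> \<delta> \<Longrightarrow> continuous_on S (plateau \<delta>)"
  by (rule has_real_derivative_imp_continuous_on[OF plateau_has_real_derivative])

lemma continuous_on_plateau_deriv:
  assumes "0 \<le> \<delta>"
  shows "continuous_on S (plateau_deriv \<delta>)"
proof -
  have "continuous_on UNIV (\<lambda>x. if x \<le> \<delta> then 0 else 3 * x\<^sup>2 - 2 * \<delta> * x - \<delta>\<^sup>2)"
    by (intro continuous_on_cases_1 continuous_intros) (auto simp: power2_eq_square)
  then have "continuous_on UNIV (plateau_deriv \<delta>)"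
    unfolding plateau_deriv_def
    by (intro continuous_on_cases_1 continuous_intros)
       (use assms in \<open>auto simp: power2_eq_square\<close>)
  then show ?thesis by (rule continuous_on_subset) simp
qed

lemma C1_with_plateau: "0 \<le> \<delta> \<Longrightarrow> C1_with (plateau \<delta>) (plateau_deriv \<delta>)"
  unfolding C1_with_def
  by (auto intro: has_field_derivative_at_within plateau_has_real_derivative continuous_on_plateau_deriv)

lemma plateau_nonpos: "0 \<le> \<delta> \<Longrightarrow> x \<le> 0 \<Longrightarrow> plateau \<delta> x \<le> 0"
  by (auto simp: plateau_def intro: mult_nonneg_nonpos)

lemma plateau_nonneg: "0 \<le> \<delta> \<Longrightarrow> 0 \<le> x \<Longrightarrow> 0 \<le> plateau \<delta> x"
  by (auto simp: plateau_def)

lemma plateau_deriv_near_quadratic: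
  assumes "0 \<le> \<delta>"
  shows "\<bar>plateau_deriv \<delta> x - (3 * x\<^sup>2 - 2 * \<delta> * x)\<bar> \<le> \<delta>\<^sup>2"
proof (cases "0 < x \<and> x \<le> \<delta>")
  case True
  then have "x * x \<le> \<delta> * x" "\<delta> * x \<le> \<delta> * \<delta>"
    by (auto intro: mult_right_mono mult_left_mono)
  moreover have "0 \<le> 9 * (x * x) - 6 * (\<delta> * x) + \<delta> * \<delta>"
    using zero_le_power2[of "3 * x - \<delta>"] by (simp add: power2_eq_square algebra_simps)
  moreover have "plateau_deriv \<delta> x - (3 * x\<^sup>2 - 2 * \<delta> * x) = 2 * (\<delta> * x) - 3 * (x * x)"
    using True by (simp add: plateau_deriv_def power2_eq_square)
  ultimately show ?thesis
    unfolding power2_eq_square by linarith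
qed (auto simp: plateau_deriv_def)

lemma omega3_plateau_deriv: "0 \<le> \<delta> \<Longrightarrow> omega3 (plateau_deriv \<delta>) 1 \<le> 8 * \<delta>\<^sup>2"
  by (rule omega3_le_of_near_quadratic[where a = 3 and b = "- 2 * \<delta>" and c = 0])
     (use plateau_deriv_near_quadratic in auto)

lemma plateau_near_cubic:
  assumes "0 \<le> \<delta>" "\<delta> \<le> 1" "x \<in> {0..1}"
  shows "\<bar>plateau \<delta> x - x\<^sup>2 * (x - \<delta>)\<bar> \<le> \<delta>\<^sup>2"
proof -
  consider "x \<le> 0" | "0 < x" "x \<le> \<delta>" | "\<delta> < x" by linarith
  then show ?thesis
  proof cases
    case 2
    have "x\<^sup>2 * (\<delta> - x) \<le> \<delta>\<^sup>2 * 1"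
      using 2 assms by (intro mult_mono power_mono) auto
    then show ?thesis using 2 by (simp add: plateau_def algebra_simps)
  next
    case 3
    have "plateau \<delta> x - x\<^sup>2 * (x - \<delta>) = - (\<delta>\<^sup>2 * (x - \<delta>))"
      using 3 assms by (simp add: plateau_def power2_eq_square algebra_simps)
    moreover have "0 \<le> \<delta>\<^sup>2 * (x - \<delta>)"
      using 3 by simp
    moreover have "\<delta>\<^sup>2 * (x - \<delta>) \<le> \<delta>\<^sup>2 * 1"
      using 3 assms by (intro mult_left_mono) auto
    ultimately show ?thesis by simp
  qed (use assms in \<open>simp add: plateau_def\<close>)
qed

lemma poly_nonneg_far_from_cubic:
  fixes P :: "real poly"
  assumes C: "double_zero_constant N C"
    and "degree P \<le> N" "3 \<le> N" "poly P 0 = 0" "poly (pderiv P) 0 = 0"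
    and "0 < \<delta>" "\<delta> \<le> 2" "0 \<le> poly P (\<delta> / 2)"
    and near: "\<forall>x\<in>{0..1}. \<bar>poly P x - x\<^sup>2 * (x - \<delta>)\<bar> \<le> \<epsilon>"
  shows "\<delta> \<le> 2 * C * \<epsilon>"
proof -
  define e where "e = P - [:0, 0, -\<delta>, 1:]"
  have poly_e: "poly e x = poly P x - x\<^sup>2 * (x - \<delta>)" for x
    by (simp add: e_def power2_eq_square algebra_simps)
  have "degree e \<le> N"
    unfolding e_def using assms(2,3) degree_diff_le_max[of P "[:0, 0, -\<delta>, 1:]"] by simp
  moreover have "coeff e 0 = 0" "coeff e 1 = 0"
    using assms(4,5) by (simp_all add: e_def poly_0_coeff_0 coeff_pderiv)
  ultimately have "\<bar>poly e (\<delta> / 2)\<bar> \<le> C * \<epsilon> * (\<delta> / 2)\<^sup>2"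
    using C[unfolded double_zero_constant_def, rule_format, of e \<epsilon> "\<delta> / 2"] near assms(6,7)
    by (simp add: poly_e)
  moreover have "\<delta> ^ 3 / 8 \<le> poly e (\<delta> / 2)"
    using assms(8) by (simp add: poly_e power2_eq_square power3_eq_cube field_simps)
  ultimately have "\<delta> * \<delta>\<^sup>2 \<le> (2 * C * \<epsilon>) * \<delta>\<^sup>2"
    by (simp add: power2_eq_square power3_eq_cube field_simps)
  then show ?thesis
    using \<open>0 < \<delta>\<close> by simp
qed

lemma sup_norm_plateau_minus_poly_lower_bound:
  fixes P :: "real poly"
  assumes C: "double_zero_constant N C"
    and "degree P \<le> N" "3 \<le> N" "0 < \<delta>" "\<delta> \<le> 1" "0 \<le> poly P (\<delta> / 2)"
    and "poly P 0 = plateau \<delta> 0" "poly (pderiv P) 0 = plateau_deriv \<delta> 0"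
  shows "\<delta> \<le> 2 * C * (sup_norm (\<lambda>x. plateau \<delta> x - poly P x) + \<delta>\<^sup>2)"
proof (rule poly_nonneg_far_from_cubic[OF C])
  have continuous: "continuous_on {-1..1} (\<lambda>x. plateau \<delta> x - poly P x)"
    using assms(4) by (intro continuous_intros continuous_on_plateau) simp
  show "\<forall>x\<in>{0..1}. \<bar>poly P x - x\<^sup>2 * (x - \<delta>)\<bar> \<le> sup_norm (\<lambda>x. plateau \<delta> x - poly P x) + \<delta>\<^sup>2"
  proof
    fix x :: real assume x: "x \<in> {0..1}"
    have "\<bar>plateau \<delta> x - poly P x\<bar> \<le> sup_norm (\<lambda>x. plateau \<delta> x - poly P x)"
      using abs_le_sup_norm[OF continuous] x by simp
    moreover have "\<bar>plateau \<delta> x - x\<^sup>2 * (x - \<delta>)\<bar> \<le> \<delta>\<^sup>2"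
      using plateau_near_cubic assms(4,5) x by simp
    ultimately show "\<bar>poly P x - x\<^sup>2 * (x - \<delta>)\<bar> \<le> sup_norm (\<lambda>x. plateau \<delta> x - poly P x) + \<delta>\<^sup>2"
      by linarith
  qed
qed (use assms in \<open>auto simp: plateau_def plateau_deriv_def\<close>)

theorem lemma3p10:
  fixes n :: nat and A :: real
  assumes "n \<ge> 1" and "A > 0"
  shows "\<exists>f f'. C1_with f f'
           \<and> (\<forall>x\<in>{-1..0}. f x \<le> 0) \<and> (\<forall>x\<in>{0..1}. f x \<ge> 0)
           \<and> (\<forall>P :: real poly. degree P \<le> n
                 \<and> (\<forall>x\<in>{0<..<1 / real n}. poly P x \<ge> 0)
                 \<and> poly P 0 = f 0 \<and> poly (pderiv P) 0 = f' 0
                 \<longrightarrow> sup_norm (\<lambda>x. f x - poly P x) > A * omega3 f' 1)"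
proof -
  obtain C where "C \<ge> 0" and C: "double_zero_constant (n + 3) C"
    by (rule double_zero_constant_exists)
  define K where "K = 2 * C * (8 * A + 1)"
  define \<delta> where "\<delta> = 1 / (K + n + 1)"
  have "0 \<le> K"
    using \<open>C \<ge> 0\<close> \<open>A > 0\<close> by (simp add: K_def)
  then have \<delta>: "0 < \<delta>" "\<delta> \<le> 1" "\<delta> / 2 < 1 / n" "K * \<delta> < 1"
    using \<open>n \<ge> 1\<close> unfolding \<delta>_def by (simp_all add: divide_simps)
  have "A * omega3 (plateau_deriv \<delta>) 1 < sup_norm (\<lambda>x. plateau \<delta> x - poly P x)"
    if P: "degree P \<le> n" "\<forall>x\<in>{0<..<1 / real n}. poly P x \<ge> 0"
      "poly P 0 = plateau \<delta> 0" "poly (pderiv P) 0 = plateau_deriv \<delta> 0" for P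
  proof (rule ccontr)
    let ?S = "sup_norm (\<lambda>x. plateau \<delta> x - poly P x)"
    have "A * omega3 (plateau_deriv \<delta>) 1 \<le> A * (8 * \<delta>\<^sup>2)"
      using omega3_plateau_deriv[of \<delta>] \<delta>(1) \<open>A > 0\<close> by (intro mult_left_mono) auto
    moreover assume "\<not> A * omega3 (plateau_deriv \<delta>) 1 < ?S"
    ultimately have "2 * C * (?S + \<delta>\<^sup>2) \<le> 2 * C * (8 * A * \<delta>\<^sup>2 + \<delta>\<^sup>2)"
      using \<open>C \<ge> 0\<close> by (intro mult_left_mono) auto
    moreover have "\<delta> \<le> 2 * C * (?S + \<delta>\<^sup>2)"
      by (rule sup_norm_plateau_minus_poly_lower_bound[OF C]) (use P \<delta> in auto)
    moreover have "2 * C * (8 * A * \<delta>\<^sup>2 + \<delta>\<^sup>2) = \<delta> * (K * \<delta>)"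
      by (simp add: K_def power2_eq_square algebra_simps)
    ultimately have "\<delta> * 1 \<le> \<delta> * (K * \<delta>)"
      by linarith
    then show False
      using \<delta> by simp
  qed
  then show ?thesis
    using C1_with_plateau plateau_nonpos plateau_nonneg \<delta>(1)
    by (intro exI[of _ "plateau \<delta>"] exI[of _ "plateau_deriv \<delta>"]) auto
qed

end
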